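(* Let $K\ge1$, $\beta_1\in(0,1)$, $\rho_1>0$, and let $\alpha_1\ge\cdots\ge\alpha_K>0$ be non-increasing. Define $\eta_1=\frac{\alpha_1}{1-\beta_1}$ if $\alpha_k=\alpha_1$ for all $k\in[K]$, and $\eta_1=\sum_{i=1}^K\alpha_i\beta_1^{i-1}$ otherwise; and for $2\le k\le K$ define recursively $$\eta_k=\frac{\eta_{k-1}-\alpha_{k-1}}{\beta_1},\qquad \rho_k=\frac{\rho_{k-1}}{\beta_1+\frac{\alpha_{k-1}}{\eta_k}}.$$ Then $\{\rho_j\}_{j=1}^K$ is non-increasing, $$\frac{\sum_{k=j-1}^t\alpha_k\beta_1^{k-(j-1)}}{\rho_{j-1}}-\frac{\sum_{k=j}^t\alpha_k\beta_1^{k-j}}{\rho_j}\ge 0\quad\text{for all }2\le j\le t\le K,$$ and $$\rho_j\le\frac{\rho_1\alpha_j}{\alpha_1(1-\beta_1)}\quad\text{for all }j\in[K].$$ Moreover, if $\alpha_j=\alpha_1$ for all $j\in[K]$, then $\eta_j=\frac{\alpha_1}{1-\beta_1}$ and $\rho_j=\rho_1$ for all $j\in[K]$.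
   Context: $[K]=\{1,\dots,K\}$. *)

theory Defs
  imports Complex_Main
begin

definition eta1 :: "nat \<Rightarrow> (nat \<Rightarrow> real) \<Rightarrow> real \<Rightarrow> real" where
  "eta1 K \<alpha> \<beta> = (if (\<forall>k\<in>{1..K}. \<alpha> k = \<alpha> 1) then \<alpha> 1 / (1 - \<beta>)
                    else (\<Sum>i=1..K. \<alpha> i * \<beta> ^ (i - 1)))"

text \<open>etaS K alpha beta n = eta_{n+1} (shifted index).\<close>
primrec etaS :: "nat \<Rightarrow> (nat \<Rightarrow> real) \<Rightarrow> real \<Rightarrow> nat \<Rightarrow> real" where
  "etaS K \<alpha> \<beta> 0 = eta1 K \<alpha> \<beta>"
| "etaS K \<alpha> \<beta> (Suc n) = (etaS K \<alpha> \<beta> n - \<alpha> (Suc n)) / \<beta>"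

text \<open>rhoS K alpha beta rho1 n = rho_{n+1} (shifted index).\<close>
primrec rhoS :: "nat \<Rightarrow> (nat \<Rightarrow> real) \<Rightarrow> real \<Rightarrow> real \<Rightarrow> nat \<Rightarrow> real" where
  "rhoS K \<alpha> \<beta> \<rho>1 0 = \<rho>1"
| "rhoS K \<alpha> \<beta> \<rho>1 (Suc n) =
     rhoS K \<alpha> \<beta> \<rho>1 n / (\<beta> + \<alpha> (Suc n) / etaS K \<alpha> \<beta> (Suc n))"

text \<open>1-based versions: eta k = eta_k, rho k = rho_k for k >= 1.\<close>
definition eta :: "nat \<Rightarrow> (nat \<Rightarrow> real) \<Rightarrow> real \<Rightarrow> nat \<Rightarrow> real" where
  "eta K \<alpha> \<beta> k = etaS K \<alpha> \<beta> (k - 1)"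

definition rho :: "nat \<Rightarrow> (nat \<Rightarrow> real) \<Rightarrow> real \<Rightarrow> real \<Rightarrow> nat \<Rightarrow> real" where
  "rho K \<alpha> \<beta> \<rho>1 k = rhoS K \<alpha> \<beta> \<rho>1 (k - 1)"

end

theory Submission
  imports Defs
begin

text \<open>
  The sequence \<open>\<eta>\<close> satisfies the backward recurrence \<open>\<eta>\<^sub>k = \<alpha>\<^sub>k + \<beta> \<eta>\<^sub>k\<^sub>+\<^sub>1\<close>, and its
  starting value is chosen so that the terminal value is \<open>\<eta>\<^sub>K = \<alpha>\<^sub>K\<close> (or the fixed point
  \<open>\<alpha>\<^sub>1 / (1 - \<beta>)\<close> in the constant case). Running the recurrence backwards from \<open>K\<close> and using
  that \<open>\<alpha>\<close> is non-increasing yields \<open>\<alpha>\<^sub>k \<le> \<eta>\<^sub>k \<le> \<alpha>\<^sub>k / (1 - \<beta>)\<close> for all \<open>k\<close>; in particular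
  \<open>\<eta>\<close> is positive and non-increasing. The recursion for \<open>\<rho>\<close> telescopes to
  \<open>\<rho>\<^sub>k = \<rho>\<^sub>1 \<eta>\<^sub>k / \<eta>\<^sub>1\<close>, and all claims reduce to these bounds on \<open>\<eta>\<close>, together with the fact
  that unrolling the recurrence shows the weighted tail sums \<open>\<Sum>\<^sub>k\<^sub>=\<^sub>j\<^sup>t \<alpha>\<^sub>k \<beta>\<^sup>k\<^sup>-\<^sup>j\<close> to be at most \<open>\<eta>\<^sub>j\<close>.
\<close>

lemma sum_geometric_weights_unfold:
  fixes f :: "nat \<Rightarrow> 'a::comm_ring_1"
  assumes "n \<le> t"
  shows "(\<Sum>k=n..t. f k * b ^ (k - n)) = f n + b * (\<Sum>k=Suc n..t. f k * b ^ (k - Suc n))"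
proof -
  have "(\<Sum>k=Suc n..t. f k * b ^ (k - n)) = (\<Sum>k=Suc n..t. b * (f k * b ^ (k - Suc n)))"
  proof (rule sum.cong)
    fix k assume "k \<in> {Suc n..t}"
    then have "k - n = Suc (k - Suc n)" by auto
    then show "f k * b ^ (k - n) = b * (f k * b ^ (k - Suc n))" by (simp add: algebra_simps)
  qed simp
  then show ?thesis
    using assms by (simp add: sum.atLeast_Suc_atMost sum_distrib_left)
qed

lemma backward_recurrence_unroll:
  fixes \<eta> \<alpha> :: "nat \<Rightarrow> 'a::comm_ring_1"
  assumes "j \<le> t"
    and "\<And>k. j \<le> k \<Longrightarrow> k < t \<Longrightarrow> \<eta> k = \<alpha> k + \<beta> * \<eta> (Suc k)"
  shows "\<eta> j = (\<Sum>k=j..t. \<alpha> k * \<beta> ^ (k - j)) + \<beta> ^ (t - j) * (\<eta> t - \<alpha> t)"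
  using assms
proof (induction j rule: inc_induct)
  case base
  then show ?case by simp
next
  case (step n)
  have power: "\<beta> * \<beta> ^ (t - Suc n) = \<beta> ^ (t - n)"
    using step.hyps by (simp flip: power_Suc add: Suc_diff_Suc)
  have "\<eta> n = \<alpha> n + \<beta> * \<eta> (Suc n)"
    using step.hyps step.prems by simp
  also have "\<dots> = \<alpha> n + \<beta> * ((\<Sum>k=Suc n..t. \<alpha> k * \<beta> ^ (k - Suc n))
      + \<beta> ^ (t - Suc n) * (\<eta> t - \<alpha> t))"
    using step.IH step.prems by simp
  also have "\<dots> = \<alpha> n + \<beta> * (\<Sum>k=Suc n..t. \<alpha> k * \<beta> ^ (k - Suc n))
      + (\<beta> * \<beta> ^ (t - Suc n)) * (\<eta> t - \<alpha> t)"
    by (simp add: algebra_simps)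
  finally show ?case
    using step.hyps by (simp only: power sum_geometric_weights_unfold less_imp_le)
qed

lemma backward_recurrence_bounds:
  fixes \<eta> \<alpha> :: "nat \<Rightarrow> real"
  assumes "0 \<le> \<beta>"
    and rec: "\<And>k. 1 \<le> k \<Longrightarrow> k < K \<Longrightarrow> \<eta> k = \<alpha> k + \<beta> * \<eta> (Suc k)"
    and antitone: "\<And>k. 1 \<le> k \<Longrightarrow> k < K \<Longrightarrow> \<alpha> (Suc k) \<le> \<alpha> k"
    and nonneg: "\<And>k. 1 \<le> k \<Longrightarrow> k \<le> K \<Longrightarrow> 0 \<le> \<alpha> k"
    and last: "\<alpha> K \<le> \<eta> K" "(1 - \<beta>) * \<eta> K \<le> \<alpha> K"
    and "1 \<le> k" "k \<le> K"
  shows "\<alpha> k \<le> \<eta> k \<and> (1 - \<beta>) * \<eta> k \<le> \<alpha> k"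
  using \<open>k \<le> K\<close> \<open>1 \<le> k\<close>
proof (induction k rule: inc_induct)
  case base
  then show ?case using last by simp
next
  case (step n)
  have lower: "\<alpha> (Suc n) \<le> \<eta> (Suc n)" and upper: "(1 - \<beta>) * \<eta> (Suc n) \<le> \<alpha> (Suc n)"
    using step by auto
  have "0 \<le> \<eta> (Suc n)"
    using lower nonneg[of "Suc n"] step.hyps by simp
  moreover have "\<beta> * ((1 - \<beta>) * \<eta> (Suc n)) \<le> \<beta> * \<alpha> n"
    using upper antitone[of n] step \<open>0 \<le> \<beta>\<close> by (meson mult_left_mono order_trans)
  ultimately show ?case
    using rec[of n] step \<open>0 \<le> \<beta>\<close> by (simp add: algebra_simps)
qed

lemma divide_le_divide_affine:
  fixes x y a b :: real
  assumes "0 < y" "0 < a + b * y" "0 \<le> a" "x \<le> y"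
  shows "x / y \<le> (a + b * x) / (a + b * y)"
proof -
  have "a * x \<le> a * y"
    using assms by (simp add: mult_left_mono)
  then have "x * (a + b * y) \<le> (a + b * x) * y"
    by (simp add: algebra_simps)
  then show ?thesis
    using assms by (simp add: divide_simps)
qed

lemma eta_Suc: "eta K \<alpha> \<beta> (Suc k) = etaS K \<alpha> \<beta> k"
  by (simp add: eta_def)

lemma rho_Suc: "rho K \<alpha> \<beta> \<rho>1 (Suc k) = rhoS K \<alpha> \<beta> \<rho>1 k"
  by (simp add: rho_def)

lemma eta_recurrence:
  assumes "\<beta> \<noteq> 0" "1 \<le> k"
  shows "eta K \<alpha> \<beta> k = \<alpha> k + \<beta> * eta K \<alpha> \<beta> (Suc k)"
  using assms by (cases k) (simp_all add: eta_Suc)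

lemma rho_recurrence:
  assumes "1 \<le> k"
  shows "rho K \<alpha> \<beta> \<rho>1 (Suc k) = rho K \<alpha> \<beta> \<rho>1 k / (\<beta> + \<alpha> k / eta K \<alpha> \<beta> (Suc k))"
  using assms by (cases k) (simp_all add: eta_Suc rho_Suc)

lemma eta_constant:
  assumes const: "\<forall>k\<in>{1..K}. \<alpha> k = \<alpha> 1" and "\<beta> \<noteq> 0" "\<beta> \<noteq> 1"
    and "1 \<le> k" "k \<le> K"
  shows "eta K \<alpha> \<beta> k = \<alpha> 1 / (1 - \<beta>)"
  using \<open>1 \<le> k\<close> \<open>k \<le> K\<close>
proof (induction k rule: nat_induct_at_least)
  case base
  have "eta K \<alpha> \<beta> 1 = eta1 K \<alpha> \<beta>"
    by (simp add: eta_def)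
  then show ?case
    unfolding eta1_def if_P[OF const] .
next
  case (Suc n)
  have "eta K \<alpha> \<beta> (Suc n) = (eta K \<alpha> \<beta> n - \<alpha> n) / \<beta>"
    using eta_recurrence[of \<beta> n K \<alpha>] Suc.hyps \<open>\<beta> \<noteq> 0\<close> by (simp add: field_simps)
  also have "\<dots> = (\<alpha> 1 / (1 - \<beta>) - \<alpha> 1) / \<beta>"
    using Suc bspec[OF const, of n] by simp
  also have "\<dots> = \<alpha> 1 / (1 - \<beta>)"
    using \<open>\<beta> \<noteq> 0\<close> \<open>\<beta> \<noteq> 1\<close> by (simp add: field_simps)
  finally show ?case .
qed

lemma eta_last_nonconstant:
  assumes "\<not> (\<forall>k\<in>{1..K}. \<alpha> k = \<alpha> 1)" "\<beta> \<noteq> 0" "1 \<le> K"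
  shows "eta K \<alpha> \<beta> K = \<alpha> K"
proof -
  have "eta K \<alpha> \<beta> 1 = eta1 K \<alpha> \<beta>"
    by (simp add: eta_def)
  also have "\<dots> = (\<Sum>k=1..K. \<alpha> k * \<beta> ^ (k - 1))"
    by (simp only: eta1_def if_not_P[OF assms(1)])
  finally have "eta K \<alpha> \<beta> 1 = (\<Sum>k=1..K. \<alpha> k * \<beta> ^ (k - 1))" .
  moreover have "eta K \<alpha> \<beta> 1
      = (\<Sum>k=1..K. \<alpha> k * \<beta> ^ (k - 1)) + \<beta> ^ (K - 1) * (eta K \<alpha> \<beta> K - \<alpha> K)"
    using assms(2,3) by (intro backward_recurrence_unroll eta_recurrence) simp_all
  ultimately show ?thesis
    using assms(2) by simp
qed

context
  fixes K :: nat and \<alpha> :: "nat \<Rightarrow> real" and \<beta> \<rho>1 :: real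
  assumes K: "K \<ge> 1"
    and \<beta>: "0 < \<beta>" "\<beta> < 1"
    and \<rho>1: "\<rho>1 > 0"
    and antitone: "\<And>i j. 1 \<le> i \<Longrightarrow> i \<le> j \<Longrightarrow> j \<le> K \<Longrightarrow> \<alpha> j \<le> \<alpha> i"
    and pos: "\<And>i. 1 \<le> i \<Longrightarrow> i \<le> K \<Longrightarrow> \<alpha> i > 0"
begin

lemma eta_last_bounds: "\<alpha> K \<le> eta K \<alpha> \<beta> K \<and> (1 - \<beta>) * eta K \<alpha> \<beta> K \<le> \<alpha> K"
proof (cases "\<forall>k\<in>{1..K}. \<alpha> k = \<alpha> 1")
  case True
  have "eta K \<alpha> \<beta> K = \<alpha> 1 / (1 - \<beta>)"
    using eta_constant[OF True] K \<beta> by simp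
  moreover have "\<alpha> 1 = \<alpha> K"
    using bspec[OF True, of K] K by simp
  ultimately have "eta K \<alpha> \<beta> K = \<alpha> K / (1 - \<beta>)"
    by simp
  moreover have "\<alpha> K > 0"
    using pos K by simp
  ultimately show ?thesis
    using \<beta> by (simp add: le_divide_eq)
next
  case False
  then have "eta K \<alpha> \<beta> K = \<alpha> K"
    using eta_last_nonconstant K \<beta> by simp
  moreover have "\<alpha> K > 0"
    using pos K by simp
  ultimately show ?thesis
    using \<beta> by simp
qed

lemma eta_bounds:
  assumes "1 \<le> k" "k \<le> K"
  shows "\<alpha> k \<le> eta K \<alpha> \<beta> k \<and> (1 - \<beta>) * eta K \<alpha> \<beta> k \<le> \<alpha> k"
proof (rule backward_recurrence_bounds[where \<beta> = \<beta> and K = K])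
  show "eta K \<alpha> \<beta> k = \<alpha> k + \<beta> * eta K \<alpha> \<beta> (Suc k)" if "1 \<le> k" for k
    using that \<beta> by (intro eta_recurrence) simp_all
  show "\<alpha> (Suc k) \<le> \<alpha> k" if "1 \<le> k" "k < K" for k
    using antitone that by simp
  show "0 \<le> \<alpha> k" if "1 \<le> k" "k \<le> K" for k
    using pos[OF that] by simp
qed (use assms eta_last_bounds \<beta> in auto)

lemma eta_pos: "1 \<le> k \<Longrightarrow> k \<le> K \<Longrightarrow> eta K \<alpha> \<beta> k > 0"
  using eta_bounds pos by (meson order_less_le_trans)

lemma eta_Suc_le:
  assumes "1 \<le> k" "Suc k \<le> K"
  shows "eta K \<alpha> \<beta> (Suc k) \<le> eta K \<alpha> \<beta> k"
proof -
  have "(1 - \<beta>) * eta K \<alpha> \<beta> (Suc k) \<le> \<alpha> k"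
    using eta_bounds[of "Suc k"] antitone[of k "Suc k"] assms by simp
  then show ?thesis
    using eta_recurrence[of \<beta> k] assms \<beta> by (simp add: algebra_simps)
qed

lemma eta_ge_tail_sum:
  assumes "1 \<le> j" "j \<le> t" "t \<le> K"
  shows "(\<Sum>k=j..t. \<alpha> k * \<beta> ^ (k - j)) \<le> eta K \<alpha> \<beta> j"
proof -
  have "eta K \<alpha> \<beta> j
      = (\<Sum>k=j..t. \<alpha> k * \<beta> ^ (k - j)) + \<beta> ^ (t - j) * (eta K \<alpha> \<beta> t - \<alpha> t)"
    using assms \<beta> by (intro backward_recurrence_unroll eta_recurrence) simp_all
  moreover have "\<alpha> t \<le> eta K \<alpha> \<beta> t"
    using eta_bounds assms by simp
  ultimately show ?thesis
    using \<beta> by simp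
qed

lemma rho_eq_eta_ratio:
  assumes "1 \<le> j" "j \<le> K"
  shows "rho K \<alpha> \<beta> \<rho>1 j = \<rho>1 * eta K \<alpha> \<beta> j / eta K \<alpha> \<beta> 1"
  using assms
proof (induction j rule: nat_induct_at_least)
  case base
  then show ?case using eta_pos[of 1] K \<rho>1 by (simp add: rho_def)
next
  case (Suc n)
  have pos_n: "eta K \<alpha> \<beta> n > 0" and pos_Suc: "eta K \<alpha> \<beta> (Suc n) > 0"
    using eta_pos Suc by auto
  have "\<beta> + \<alpha> n / eta K \<alpha> \<beta> (Suc n) = eta K \<alpha> \<beta> n / eta K \<alpha> \<beta> (Suc n)"
    using eta_recurrence[of \<beta> n] Suc.hyps \<beta> pos_Suc by (simp add: field_simps)
  then show ?case
    using rho_recurrence[of n] Suc pos_n pos_Suc by simp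
qed

lemma divide_rho:
  assumes "1 \<le> k" "k \<le> K"
  shows "x / rho K \<alpha> \<beta> \<rho>1 k = eta K \<alpha> \<beta> 1 / \<rho>1 * (x / eta K \<alpha> \<beta> k)"
  using rho_eq_eta_ratio[OF assms] eta_pos[OF assms] eta_pos[of 1] K \<rho>1 by simp

lemma rho_antitone:
  assumes "2 \<le> j" "j \<le> K"
  shows "rho K \<alpha> \<beta> \<rho>1 j \<le> rho K \<alpha> \<beta> \<rho>1 (j - 1)"
proof -
  obtain i where i: "j = Suc i" "1 \<le> i"
    using assms(1) by (metis Suc_le_D Suc_le_mono one_add_one plus_1_eq_Suc)
  have "\<rho>1 * eta K \<alpha> \<beta> j / eta K \<alpha> \<beta> 1 \<le> \<rho>1 * eta K \<alpha> \<beta> i / eta K \<alpha> \<beta> 1"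
    using eta_Suc_le[of i] eta_pos[of 1] i assms K \<rho>1
    by (intro divide_right_mono mult_left_mono) simp_all
  then show ?thesis
    using rho_eq_eta_ratio[of j] rho_eq_eta_ratio[of i] i assms by simp
qed

lemma rho_tail_sum_ratio_antitone:
  assumes "2 \<le> j" "j \<le> t" "t \<le> K"
  shows "(\<Sum>k=j..t. \<alpha> k * \<beta> ^ (k - j)) / rho K \<alpha> \<beta> \<rho>1 j
       \<le> (\<Sum>k=j-1..t. \<alpha> k * \<beta> ^ (k - (j - 1))) / rho K \<alpha> \<beta> \<rho>1 (j - 1)"
proof -
  obtain i where i: "j = Suc i" "1 \<le> i"
    using assms(1) by (metis Suc_le_D Suc_le_mono one_add_one plus_1_eq_Suc)
  define S where "S = (\<Sum>k=j..t. \<alpha> k * \<beta> ^ (k - j))"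
  have tail_i: "(\<Sum>k=i..t. \<alpha> k * \<beta> ^ (k - i)) = \<alpha> i + \<beta> * S"
    using i assms by (simp add: S_def sum_geometric_weights_unfold)
  have "S / eta K \<alpha> \<beta> j \<le> (\<alpha> i + \<beta> * S) / (\<alpha> i + \<beta> * eta K \<alpha> \<beta> j)"
    using eta_pos[of i] eta_pos[of j] eta_recurrence[of \<beta> i] eta_ge_tail_sum[of j t]
      pos[of i] i assms \<beta>
    by (intro divide_le_divide_affine) (simp_all add: S_def)
  then have "S / eta K \<alpha> \<beta> j \<le> (\<alpha> i + \<beta> * S) / eta K \<alpha> \<beta> i"
    using eta_recurrence[of \<beta> i] i \<beta> by simp
  then have "eta K \<alpha> \<beta> 1 / \<rho>1 * (S / eta K \<alpha> \<beta> j)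
      \<le> eta K \<alpha> \<beta> 1 / \<rho>1 * ((\<alpha> i + \<beta> * S) / eta K \<alpha> \<beta> i)"
    using eta_pos[of 1] K \<rho>1 by (intro mult_left_mono) simp_all
  moreover have "S / rho K \<alpha> \<beta> \<rho>1 j = eta K \<alpha> \<beta> 1 / \<rho>1 * (S / eta K \<alpha> \<beta> j)"
    using i assms by (intro divide_rho) simp_all
  moreover have "(\<alpha> i + \<beta> * S) / rho K \<alpha> \<beta> \<rho>1 i
      = eta K \<alpha> \<beta> 1 / \<rho>1 * ((\<alpha> i + \<beta> * S) / eta K \<alpha> \<beta> i)"
    using i assms by (intro divide_rho) simp_all
  moreover have "j - 1 = i"
    using i by simp
  ultimately show ?thesis
    unfolding S_def[symmetric] using tail_i by simp
qed

lemma rho_le_alpha_ratio: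
  assumes "1 \<le> j" "j \<le> K"
  shows "rho K \<alpha> \<beta> \<rho>1 j \<le> \<rho>1 * \<alpha> j / (\<alpha> 1 * (1 - \<beta>))"
proof -
  have "rho K \<alpha> \<beta> \<rho>1 j = \<rho>1 * eta K \<alpha> \<beta> j / eta K \<alpha> \<beta> 1"
    using rho_eq_eta_ratio assms by simp
  also have "\<dots> \<le> \<rho>1 * (\<alpha> j / (1 - \<beta>)) / eta K \<alpha> \<beta> 1"
    using eta_bounds[OF assms] eta_pos[of 1] K \<beta> \<rho>1
    by (intro divide_right_mono mult_left_mono) (simp_all add: field_simps)
  also have "\<dots> \<le> \<rho>1 * (\<alpha> j / (1 - \<beta>)) / \<alpha> 1"
    using eta_bounds[of 1] pos[of 1] pos[OF assms] K \<beta> \<rho>1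
    by (intro divide_left_mono) simp_all
  finally show ?thesis
    by (simp add: mult.commute)
qed

lemma constant_alpha_eta_rho:
  assumes const: "\<forall>j. 1 \<le> j \<and> j \<le> K \<longrightarrow> \<alpha> j = \<alpha> 1" and "1 \<le> j" "j \<le> K"
  shows "eta K \<alpha> \<beta> j = \<alpha> 1 / (1 - \<beta>) \<and> rho K \<alpha> \<beta> \<rho>1 j = \<rho>1"
proof -
  have "\<forall>k\<in>{1..K}. \<alpha> k = \<alpha> 1"
    using const atLeastAtMost_iff by blast
  then have eta_const: "eta K \<alpha> \<beta> k = \<alpha> 1 / (1 - \<beta>)" if "1 \<le> k" "k \<le> K" for k
    by (rule eta_constant) (use that \<beta> in auto)
  then have "eta K \<alpha> \<beta> j = eta K \<alpha> \<beta> 1"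
    using assms(2,3) K by simp
  then show ?thesis
    using eta_const[of j] rho_eq_eta_ratio eta_pos[of 1] K assms(2,3) by simp
qed

end

theorem lemma2:
  fixes K :: nat and \<alpha> :: "nat \<Rightarrow> real" and \<beta> \<rho>1 :: real
  assumes "K \<ge> 1"
    and "0 < \<beta>" and "\<beta> < 1"
    and "\<rho>1 > 0"
    and "\<And>i j. 1 \<le> i \<Longrightarrow> i \<le> j \<Longrightarrow> j \<le> K \<Longrightarrow> \<alpha> j \<le> \<alpha> i"
    and "\<And>i. 1 \<le> i \<Longrightarrow> i \<le> K \<Longrightarrow> \<alpha> i > 0"
  shows "(\<forall>j. 2 \<le> j \<and> j \<le> K \<longrightarrow> rho K \<alpha> \<beta> \<rho>1 j \<le> rho K \<alpha> \<beta> \<rho>1 (j - 1))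
       \<and> (\<forall>j t. 2 \<le> j \<and> j \<le> t \<and> t \<le> K \<longrightarrow>
            (\<Sum>k=j-1..t. \<alpha> k * \<beta> ^ (k - (j - 1))) / rho K \<alpha> \<beta> \<rho>1 (j - 1)
          - (\<Sum>k=j..t. \<alpha> k * \<beta> ^ (k - j)) / rho K \<alpha> \<beta> \<rho>1 j \<ge> 0)
       \<and> (\<forall>j. 1 \<le> j \<and> j \<le> K \<longrightarrow> rho K \<alpha> \<beta> \<rho>1 j \<le> \<rho>1 * \<alpha> j / (\<alpha> 1 * (1 - \<beta>)))
       \<and> ((\<forall>j. 1 \<le> j \<and> j \<le> K \<longrightarrow> \<alpha> j = \<alpha> 1) \<longrightarrow>
            (\<forall>j. 1 \<le> j \<and> j \<le> K \<longrightarrow> eta K \<alpha> \<beta> j = \<alpha> 1 / (1 - \<beta>) \<and> rho K \<alpha> \<beta> \<rho>1 j = \<rho>1))"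
  using rho_antitone[of K \<beta> \<rho>1 \<alpha>, OF assms] rho_tail_sum_ratio_antitone[of K \<beta> \<rho>1 \<alpha>, OF assms]
    rho_le_alpha_ratio[of K \<beta> \<rho>1 \<alpha>, OF assms] constant_alpha_eta_rho[of K \<beta> \<rho>1 \<alpha>, OF assms]
  unfolding diff_ge_0_iff_ge by blast

end
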